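(* Let $(P,A,\lambda)$ be a marked poset and $(U_1,U_2)$ an admissible decomposition of it. Then for every $N\in\mathbb{N}$, $S_{U_1,U_2}(N\lambda)$ equals the $N$-fold Minkowski sum $S_{U_1,U_2}(\lambda)+\cdots+S_{U_1,U_2}(\lambda)$.
   Context: A marked poset is a triple $(P,A,\lambda)$ where $(P,\prec)$ is a finite poset, $A\subseteq P$ contains all minimal and all maximal elements of $P$, and $\lambda:A\to\mathbb{Z}_{\ge 0}$, $a\mapsto\lambda_a$. A decomposition of $(P,A,\lambda)$ is a pair $(U_1,U_2)$ of disjoint sets with $U_1\cup U_2=P\setminus A$; it is admissible if there are no $u_1\in U_1$, $u_2\in U_2$ with $u_1\prec u_2$. Put $A_1=A\cup U_1$. The marked chain-order polytope $\mathcal{CO}_{U_1,U_2}(\lambda)\subset\mathbb{R}^{P\setminus A}$ is the set of $(x_p)_{p\in P\setminus A}$ such that: (i) $x_p\le\lambda_a$ whenever $p\in U_1$, $a\in A$, $p\prec a$; (ii) $\lambda_b\le x_q$ whenever $q\in U_1$, $b\in A$, $b\prec q$; (iii) $x_p\le x_q$ whenever $p,q\in U_1$, $p\prec q$; (iv) $x_p\ge0$ for $p\in U_2$; (v) for every chain $b\prec p_n\prec\cdots\prec p_1\prec a$ with $n\ge1$, $a,b\in A_1$, $p_i\in U_2$: $x_{p_1}+\cdots+x_{p_n}\le\lambda_a-\lambda_b$, where $\lambda_q$ means $x_q$ for $q\in U_1$; (vi) for every chain $p_1\prec\cdots\prec p_s\prec q$ with $q\in U_1$, $p_i\in U_2$: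 $x_{p_1}+\cdots+x_{p_s}\le x_q$. Set $S_{U_1,U_2}(\lambda)=\mathcal{CO}_{U_1,U_2}(\lambda)\cap\mathbb{Z}_{\ge0}^{P\setminus A}$; $N\lambda$ is the marking $a\mapsto N\lambda_a$. *)

theory Defs
  imports Complex_Main
begin

text \<open>A marked poset (P, A, lambda): P a finite carrier, lt the strict order on P,
  A a subset of P containing all minimal and maximal elements, lambda valued in
  nonnegative integers (only its values on A matter).\<close>

definition marked_poset :: "'a set \<Rightarrow> ('a \<Rightarrow> 'a \<Rightarrow> bool) \<Rightarrow> 'a set \<Rightarrow> bool" where
  "marked_poset P lt A \<longleftrightarrow>
     finite P \<and>
     (\<forall>p\<in>P. \<not> lt p p) \<and>
     (\<forall>p\<in>P. \<forall>q\<in>P. \<forall>r\<in>P. lt p q \<longrightarrow> lt q r \<longrightarrow> lt p r) \<and>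
     A \<subseteq> P \<and>
     (\<forall>p\<in>P. (\<not> (\<exists>q\<in>P. lt q p)) \<longrightarrow> p \<in> A) \<and>
     (\<forall>p\<in>P. (\<not> (\<exists>q\<in>P. lt p q)) \<longrightarrow> p \<in> A)"

definition decomposition :: "'a set \<Rightarrow> 'a set \<Rightarrow> 'a set \<Rightarrow> 'a set \<Rightarrow> bool" where
  "decomposition P A U1 U2 \<longleftrightarrow> U1 \<inter> U2 = {} \<and> U1 \<union> U2 = P - A"

definition admissible ::
  "'a set \<Rightarrow> ('a \<Rightarrow> 'a \<Rightarrow> bool) \<Rightarrow> 'a set \<Rightarrow> 'a set \<Rightarrow> 'a set \<Rightarrow> bool" where
  "admissible P lt A U1 U2 \<longleftrightarrow> decomposition P A U1 U2 \<and>
     \<not> (\<exists>u1\<in>U1. \<exists>u2\<in>U2. lt u1 u2)"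

text \<open>Points of R^(P - A) are represented as functions 'a => real vanishing outside P - A.
  For q in U1, lambda_q means x_q.\<close>

definition lamx :: "'a set \<Rightarrow> ('a \<Rightarrow> nat) \<Rightarrow> ('a \<Rightarrow> real) \<Rightarrow> 'a \<Rightarrow> real" where
  "lamx U1 lam x q = (if q \<in> U1 then x q else real (lam q))"

definition chain_order_polytope ::
  "'a set \<Rightarrow> ('a \<Rightarrow> 'a \<Rightarrow> bool) \<Rightarrow> 'a set \<Rightarrow> 'a set \<Rightarrow> 'a set \<Rightarrow> ('a \<Rightarrow> nat)
     \<Rightarrow> ('a \<Rightarrow> real) set" where
  "chain_order_polytope P lt A U1 U2 lam = {x.
     (\<forall>p. p \<notin> P - A \<longrightarrow> x p = 0) \<and>
     (\<forall>p\<in>U1. \<forall>a\<in>A. lt p a \<longrightarrow> x p \<le> real (lam a)) \<and>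
     (\<forall>q\<in>U1. \<forall>b\<in>A. lt b q \<longrightarrow> real (lam b) \<le> x q) \<and>
     (\<forall>p\<in>U1. \<forall>q\<in>U1. lt p q \<longrightarrow> x p \<le> x q) \<and>
     (\<forall>p\<in>U2. 0 \<le> x p) \<and>
     (\<forall>a\<in>A \<union> U1. \<forall>b\<in>A \<union> U1. \<forall>cs. cs \<noteq> [] \<longrightarrow> set cs \<subseteq> U2 \<longrightarrow>
        sorted_wrt lt (b # cs @ [a]) \<longrightarrow>
        sum_list (map x cs) \<le> lamx U1 lam x a - lamx U1 lam x b) \<and>
     (\<forall>q\<in>U1. \<forall>cs. set cs \<subseteq> U2 \<longrightarrow> sorted_wrt lt (cs @ [q]) \<longrightarrow>
        sum_list (map x cs) \<le> x q)}"

definition S_lattice ::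
  "'a set \<Rightarrow> ('a \<Rightarrow> 'a \<Rightarrow> bool) \<Rightarrow> 'a set \<Rightarrow> 'a set \<Rightarrow> 'a set \<Rightarrow> ('a \<Rightarrow> nat)
     \<Rightarrow> ('a \<Rightarrow> int) set" where
  "S_lattice P lt A U1 U2 lam = {x. (\<forall>p. 0 \<le> x p) \<and>
     (\<lambda>p. real_of_int (x p)) \<in> chain_order_polytope P lt A U1 U2 lam}"

definition minkowski_sum :: "('a \<Rightarrow> int) set \<Rightarrow> ('a \<Rightarrow> int) set \<Rightarrow> ('a \<Rightarrow> int) set" where
  "minkowski_sum X Y = {(\<lambda>p. x p + y p) | x y. x \<in> X \<and> y \<in> Y}"

fun minkowski_power :: "nat \<Rightarrow> ('a \<Rightarrow> int) set \<Rightarrow> ('a \<Rightarrow> int) set" where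
  "minkowski_power 0 X = {(\<lambda>p. 0)}"
| "minkowski_power (Suc n) X = minkowski_sum X (minkowski_power n X)"

end

theory Submission
  imports Defs
begin

text \<open>
  The inclusion of the Minkowski sum is immediate: all defining inequalities are linear and
  homogeneous in \<open>(x, \<lambda>)\<close>. For the converse, let \<open>x \<in> S(N\<lambda>)\<close> and, for \<open>p \<in> U2\<close>, let
  \<open>t p\<close> be the largest weight \<open>\<lambda>_b + x_{p_1} + \<dots> + x_p\<close> of a chain \<open>b < p_1 < \<dots> < p\<close> with
  \<open>b \<in> A \<union> U1\<close> and all \<open>p_i \<in> U2\<close>. The intervals \<open>(t p - x p, t p]\<close> are stacked along every
  chain of \<open>U2\<close> between the values \<open>\<lambda>_b\<close> and \<open>\<lambda>_a\<close> of its ends. Hence for every monotone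
  \<open>\<phi> : \<int> \<rightarrow> \<int>\<close> with \<open>\<phi> 0 = 0\<close>, the point with coordinates \<open>\<phi> (x p)\<close> on \<open>U1\<close> and
  \<open>\<phi> (t p) - \<phi> (t p - x p)\<close> on \<open>U2\<close> lies in \<open>S(\<phi> \<circ> N\<lambda>)\<close>. Taking \<open>\<phi> t = \<lfloor>t / N\<rfloor>\<close> and
  \<open>\<phi> t = t - \<lfloor>t / N\<rfloor>\<close> writes \<open>x\<close> as a point of \<open>S(\<lambda>)\<close> plus a point of \<open>S((N - 1)\<lambda>)\<close>, and
  induction on \<open>N\<close> concludes.
\<close>

lemma sorted_wrt_distinct:
  "(\<And>u. u \<in> set xs \<Longrightarrow> \<not> lt u u) \<Longrightarrow> sorted_wrt lt xs \<Longrightarrow> distinct xs"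
  by (induction xs) auto

lemma sorted_wrt_snoc_transp_on:
  assumes "transp_on S lt" "set xs \<subseteq> S" "q \<in> S"
    and "sorted_wrt lt xs" "xs \<noteq> []" "lt (last xs) q"
  shows "sorted_wrt lt (xs @ [q])"
  using assms(2-)
proof (induction xs)
  case (Cons u xs)
  show ?case
  proof (cases "xs = []")
    case False
    then have "lt u (last xs)" "last xs \<in> S" using Cons.prems by auto
    then have "lt u q" using Cons.prems False assms(1) by (auto dest: transp_onD)
    then show ?thesis using Cons False by auto
  qed (use Cons.prems in simp)
qed simp

lemma diff_div_mono:
  fixes a b d :: int
  assumes "0 < d" and "a \<le> b"
  shows "a - a div d \<le> b - b div d"
proof -
  have "(b - a) * 1 \<le> (b - a) * d"
    using assms by (intro mult_left_mono) simp_all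
  then have "b div d \<le> (a + (b - a) * d) div d"
    using assms(1) by (intro zdiv_mono1) simp_all
  also have "\<dots> = a div d + (b - a)" using assms(1) by simp
  finally show ?thesis by simp
qed

lemma marked_posetD:
  assumes "marked_poset P lt A"
  shows "finite P" and "A \<subseteq> P" and "transp_on P lt" and "p \<in> P \<Longrightarrow> \<not> lt p p"
    and "p \<in> P - A \<Longrightarrow> \<exists>q\<in>P. lt q p"
  using assms unfolding marked_poset_def transp_on_def by blast+

lemma wf_marked_poset:
  assumes "marked_poset P lt A"
  shows "wf {(q, r). q \<in> P \<and> r \<in> P \<and> lt q r}" (is "wf ?R")
proof (rule finite_acyclic_wf)
  have "?R \<subseteq> P \<times> P" by blast
  then show "finite ?R"
    using marked_posetD(1)[OF assms] by (simp add: finite_subset)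
  have "trans ?R"
    by (auto simp: trans_def intro: transp_onD[OF marked_posetD(3)[OF assms]])
  moreover have "irrefl ?R"
    by (auto simp: irrefl_def dest: marked_posetD(4)[OF assms])
  ultimately
  show "acyclic ?R" by (simp add: acyclic_irrefl)
qed

lemma marked_below:
  assumes mp: "marked_poset P lt A" and p: "p \<in> P - A"
  shows "\<exists>b\<in>A. lt b p"
proof -
  have pP: "p \<in> P" using p by blast
  obtain q where "q \<in> {q \<in> P. lt q p}" using marked_posetD(5)[OF mp p] by blast
  then obtain b where "b \<in> {q \<in> P. lt q p}"
    and min: "\<And>q. (q, b) \<in> {(q, r). q \<in> P \<and> r \<in> P \<and> lt q r} \<Longrightarrow> q \<notin> {q \<in> P. lt q p}"
    by (rule wfE_min[OF wf_marked_poset[OF mp]]) blast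
  then have bP: "b \<in> P" and bp: "lt b p" by simp_all
  have "b \<in> A"
  proof (rule ccontr)
    assume "b \<notin> A"
    then obtain q where qP: "q \<in> P" and qb: "lt q b" using marked_posetD(5)[OF mp] bP by blast
    have "lt q p" using transp_onD[OF marked_posetD(3)[OF mp] qP bP pP qb bp] .
    then show False using min qP bP qb by blast
  qed
  then show ?thesis using bp by blast
qed

lemma marked_poset_converse:
  "marked_poset P lt A \<Longrightarrow> marked_poset P (\<lambda>p q. lt q p) A"
  unfolding marked_poset_def by blast

lemma marked_above:
  "marked_poset P lt A \<Longrightarrow> p \<in> P - A \<Longrightarrow> \<exists>a\<in>A. lt p a"
  by (rule marked_below[OF marked_poset_converse])

definition lamx_int :: "'a set \<Rightarrow> ('a \<Rightarrow> nat) \<Rightarrow> ('a \<Rightarrow> int) \<Rightarrow> 'a \<Rightarrow> int" where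
  "lamx_int U1 lam x q = (if q \<in> U1 then x q else int (lam q))"

definition S_int ::
  "'a set \<Rightarrow> ('a \<Rightarrow> 'a \<Rightarrow> bool) \<Rightarrow> 'a set \<Rightarrow> 'a set \<Rightarrow> 'a set \<Rightarrow> ('a \<Rightarrow> nat)
     \<Rightarrow> ('a \<Rightarrow> int) set" where
  "S_int P lt A U1 U2 lam = {x.
     (\<forall>p. 0 \<le> x p) \<and>
     (\<forall>p. p \<notin> P - A \<longrightarrow> x p = 0) \<and>
     (\<forall>p\<in>U1. \<forall>a\<in>A. lt p a \<longrightarrow> x p \<le> int (lam a)) \<and>
     (\<forall>q\<in>U1. \<forall>b\<in>A. lt b q \<longrightarrow> int (lam b) \<le> x q) \<and>
     (\<forall>p\<in>U1. \<forall>q\<in>U1. lt p q \<longrightarrow> x p \<le> x q) \<and>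
     (\<forall>a\<in>A \<union> U1. \<forall>b\<in>A \<union> U1. \<forall>cs. cs \<noteq> [] \<longrightarrow> set cs \<subseteq> U2 \<longrightarrow>
        sorted_wrt lt (b # cs @ [a]) \<longrightarrow>
        sum_list (map x cs) \<le> lamx_int U1 lam x a - lamx_int U1 lam x b) \<and>
     (\<forall>q\<in>U1. \<forall>cs. set cs \<subseteq> U2 \<longrightarrow> sorted_wrt lt (cs @ [q]) \<longrightarrow>
        sum_list (map x cs) \<le> x q)}"

lemma S_lattice_eq_S_int: "S_lattice P lt A U1 U2 lam = S_int P lt A U1 U2 lam"
proof -
  have lamx: "lamx U1 lam (\<lambda>p. real_of_int (x p)) q = real_of_int (lamx_int U1 lam x q)"
    for x q by (simp add: lamx_def lamx_int_def)
  have sum: "sum_list (map (\<lambda>p. real_of_int (x p)) cs) = real_of_int (sum_list (map x cs))"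
    for x :: "'a \<Rightarrow> int" and cs by (induction cs) simp_all
  have nat_le: "real n \<le> real_of_int y \<longleftrightarrow> int n \<le> y" "real_of_int y \<le> real n \<longleftrightarrow> y \<le> int n"
    for n y by linarith+
  show ?thesis
    unfolding S_lattice_def S_int_def chain_order_polytope_def mem_Collect_eq lamx sum
      of_int_diff[symmetric] of_int_le_iff of_int_eq_0_iff of_int_0_le_iff nat_le
    by (simp cong: conj_cong)
qed

lemma S_intD:
  assumes "x \<in> S_int P lt A U1 U2 lam"
  shows "0 \<le> x p"
    and "p \<notin> P - A \<Longrightarrow> x p = 0"
    and "p \<in> U1 \<Longrightarrow> a \<in> A \<Longrightarrow> lt p a \<Longrightarrow> x p \<le> int (lam a)"
    and "q \<in> U1 \<Longrightarrow> b \<in> A \<Longrightarrow> lt b q \<Longrightarrow> int (lam b) \<le> x q"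
    and "p \<in> U1 \<Longrightarrow> q \<in> U1 \<Longrightarrow> lt p q \<Longrightarrow> x p \<le> x q"
    and "a \<in> A \<union> U1 \<Longrightarrow> b \<in> A \<union> U1 \<Longrightarrow> cs \<noteq> [] \<Longrightarrow> set cs \<subseteq> U2 \<Longrightarrow>
      sorted_wrt lt (b # cs @ [a]) \<Longrightarrow>
      sum_list (map x cs) \<le> lamx_int U1 lam x a - lamx_int U1 lam x b"
    and "q \<in> U1 \<Longrightarrow> set cs \<subseteq> U2 \<Longrightarrow> sorted_wrt lt (cs @ [q]) \<Longrightarrow>
      sum_list (map x cs) \<le> x q"
  using assms unfolding S_int_def by simp_all

locale chain_order_point =
  fixes P :: "'a set" and lt :: "'a \<Rightarrow> 'a \<Rightarrow> bool" and A U1 U2 :: "'a set"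
    and lam :: "'a \<Rightarrow> nat" and x :: "'a \<Rightarrow> int"
  assumes marked: "marked_poset P lt A"
    and decomp: "decomposition P A U1 U2"
    and point: "x \<in> S_int P lt A U1 U2 lam"
begin

lemma U1_subset: "U1 \<subseteq> P - A" and U2_subset: "U2 \<subseteq> P - A"
  and U1_U2_disjoint: "U1 \<inter> U2 = {}" and U1_Un_U2: "U1 \<union> U2 = P - A"
  using decomp unfolding decomposition_def by auto

lemmas point_nonneg = S_intD(1)[OF point]

lemma lamx_int_nonneg: "0 \<le> lamx_int U1 lam x b"
  using point_nonneg by (simp add: lamx_int_def)

definition chain_weights :: "'a \<Rightarrow> int set" where
  "chain_weights p = {lamx_int U1 lam x b + sum_list (map x cs) | b cs.
     b \<in> A \<union> U1 \<and> set cs \<subseteq> U2 \<and> cs \<noteq> [] \<and> last cs = p \<and> sorted_wrt lt (b # cs)}"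

definition max_chain_weight :: "'a \<Rightarrow> int" where
  "max_chain_weight p = Max (chain_weights p)"

lemma finite_chain_weights: "finite (chain_weights p)"
proof -
  let ?D = "(A \<union> U1) \<times> {cs. set cs \<subseteq> P \<and> length cs \<le> card P}"
  have "chain_weights p \<subseteq> (\<lambda>(b, cs). lamx_int U1 lam x b + sum_list (map x cs)) ` ?D"
  proof
    fix v assume "v \<in> chain_weights p"
    then obtain b cs where v: "v = lamx_int U1 lam x b + sum_list (map x cs)" "b \<in> A \<union> U1"
      "set cs \<subseteq> U2" "sorted_wrt lt (b # cs)" unfolding chain_weights_def by blast
    have csP: "set cs \<subseteq> P" using v(3) U2_subset by blast
    then have "distinct cs"
      using v(4) marked_posetD(4)[OF marked] by (intro sorted_wrt_distinct[of cs lt]) auto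
    then have "length cs \<le> card P"
      using card_mono[OF marked_posetD(1)[OF marked] csP] distinct_card[of cs] by simp
    with v csP show "v \<in> (\<lambda>(b, cs). lamx_int U1 lam x b + sum_list (map x cs)) ` ?D"
      by force
  qed
  moreover have "finite ?D"
    using marked_posetD(1,2)[OF marked] U1_subset
    by (intro finite_SigmaI finite_lists_length_le) (auto intro: finite_subset)
  ultimately show ?thesis by (rule finite_subset[OF _ finite_imageI])
qed

lemma le_max_chain_weight: "v \<in> chain_weights p \<Longrightarrow> v \<le> max_chain_weight p"
  unfolding max_chain_weight_def using finite_chain_weights by (rule Max_ge)

lemma singleton_chain_weight:
  "b \<in> A \<union> U1 \<Longrightarrow> p \<in> U2 \<Longrightarrow> lt b p \<Longrightarrow> lamx_int U1 lam x b + x p \<in> chain_weights p"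
  unfolding chain_weights_def by (intro CollectI exI[of _ b] exI[of _ "[p]"]) simp

lemma lamx_int_add_le_max_chain_weight:
  "b \<in> A \<union> U1 \<Longrightarrow> p \<in> U2 \<Longrightarrow> lt b p \<Longrightarrow> lamx_int U1 lam x b + x p \<le> max_chain_weight p"
  by (intro le_max_chain_weight singleton_chain_weight)

lemma le_max_chain_weight_self:
  assumes "p \<in> U2" shows "x p \<le> max_chain_weight p"
proof -
  obtain b where "b \<in> A" "lt b p" using marked_below[OF marked] assms U2_subset by blast
  then have "lamx_int U1 lam x b + x p \<le> max_chain_weight p"
    using assms by (intro lamx_int_add_le_max_chain_weight) simp_all
  then show ?thesis using lamx_int_nonneg[of b] by linarith
qed

lemma max_chain_weight_attained:
  assumes "p \<in> U2"
  obtains b cs where "max_chain_weight p = lamx_int U1 lam x b + sum_list (map x cs)"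
    and "b \<in> A \<union> U1" "set cs \<subseteq> U2" "cs \<noteq> []" "last cs = p" "sorted_wrt lt (b # cs)"
proof -
  obtain b where "b \<in> A" "lt b p" using marked_below[OF marked] assms U2_subset by blast
  then have "chain_weights p \<noteq> {}" using singleton_chain_weight assms by blast
  then have "max_chain_weight p \<in> chain_weights p"
    unfolding max_chain_weight_def using finite_chain_weights by (rule Max_in[rotated])
  then show ?thesis unfolding chain_weights_def mem_Collect_eq by (elim exE conjE) (rule that)
qed

lemma max_chain_weight_chain_snoc:
  assumes "p \<in> U2" "q \<in> P" "lt p q"
  obtains b cs where "max_chain_weight p = lamx_int U1 lam x b + sum_list (map x cs)"
    and "b \<in> A \<union> U1" "set cs \<subseteq> U2" "cs \<noteq> []" "sorted_wrt lt (b # cs @ [q])"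
proof -
  obtain b cs where w: "max_chain_weight p = lamx_int U1 lam x b + sum_list (map x cs)"
    "b \<in> A \<union> U1" "set cs \<subseteq> U2" "cs \<noteq> []" "last cs = p" "sorted_wrt lt (b # cs)"
    using max_chain_weight_attained[OF assms(1)] .
  have "sorted_wrt lt ((b # cs) @ [q])"
  proof (rule sorted_wrt_snoc_transp_on[OF marked_posetD(3)[OF marked]])
    show "set (b # cs) \<subseteq> P" using w(2,3) marked_posetD(2)[OF marked] U1_subset U2_subset by auto
  qed (use w assms in auto)
  with w show ?thesis using that by simp
qed

lemma max_chain_weight_step:
  assumes "r \<in> U2" "p \<in> U2" "lt r p"
  shows "max_chain_weight r + x p \<le> max_chain_weight p"
proof -
  obtain b cs where w: "max_chain_weight r = lamx_int U1 lam x b + sum_list (map x cs)"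
    "b \<in> A \<union> U1" "set cs \<subseteq> U2" "cs \<noteq> []" "sorted_wrt lt (b # cs @ [p])"
    using max_chain_weight_chain_snoc[OF assms(1) _ assms(3)] assms(2) U2_subset by blast
  have "lamx_int U1 lam x b + sum_list (map x (cs @ [p])) \<in> chain_weights p"
    unfolding chain_weights_def using w assms(2)
    by (intro CollectI exI[of _ b] exI[of _ "cs @ [p]"]) auto
  then show ?thesis using w(1) le_max_chain_weight by fastforce
qed

lemma max_chain_weight_le:
  assumes "p \<in> U2" "a \<in> A \<union> U1" "lt p a"
  shows "max_chain_weight p \<le> lamx_int U1 lam x a"
proof -
  have "a \<in> P" using assms(2) marked_posetD(2)[OF marked] U1_subset by blast
  then obtain b cs where w: "max_chain_weight p = lamx_int U1 lam x b + sum_list (map x cs)"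
    "b \<in> A \<union> U1" "set cs \<subseteq> U2" "cs \<noteq> []" "sorted_wrt lt (b # cs @ [a])"
    using max_chain_weight_chain_snoc[OF assms(1) _ assms(3)] by blast
  then show ?thesis using S_intD(6)[OF point assms(2) w(2,4,3,5)] by simp
qed

text \<open>On \<open>U2\<close>, \<open>x p\<close> is the length of the interval \<open>(max_chain_weight p - x p, max_chain_weight p]\<close>;
  \<open>transfer \<phi> p\<close> is the length of its image under \<open>\<phi>\<close>.\<close>

definition transfer :: "(int \<Rightarrow> int) \<Rightarrow> 'a \<Rightarrow> int" where
  "transfer \<phi> p =
     (if p \<in> U1 then \<phi> (x p)
      else if p \<in> U2 then \<phi> (max_chain_weight p) - \<phi> (max_chain_weight p - x p)
      else 0)"

lemma transfer_ident: "transfer (\<lambda>t. t) = x"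
  using S_intD(2)[OF point] U1_Un_U2 by (auto simp: fun_eq_iff transfer_def)

lemma transfer_add: "transfer (\<lambda>t. \<phi> t + \<psi> t) p = transfer \<phi> p + transfer \<psi> p"
  by (simp add: transfer_def)

lemma transfer_outside: "p \<notin> P - A \<Longrightarrow> transfer \<phi> p = 0"
  using U1_Un_U2 by (auto simp: transfer_def)

lemma transfer_U1: "p \<in> U1 \<Longrightarrow> transfer \<phi> p = \<phi> (x p)"
  by (simp add: transfer_def)

lemma transfer_U2:
  "p \<in> U2 \<Longrightarrow> transfer \<phi> p = \<phi> (max_chain_weight p) - \<phi> (max_chain_weight p - x p)"
  using U1_U2_disjoint by (auto simp: transfer_def)

context
  fixes \<phi> :: "int \<Rightarrow> int" and mu :: "'a \<Rightarrow> nat"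
  assumes mono_\<phi>: "mono \<phi>" and \<phi>_0: "\<phi> 0 = 0"
    and \<phi>_marking: "\<And>a. a \<in> A \<Longrightarrow> \<phi> (int (lam a)) = int (mu a)"
begin

lemma transfer_nonneg: "0 \<le> transfer \<phi> p"
  using monoD[OF mono_\<phi>, of 0 "x p"] monoD[OF mono_\<phi>, of "max_chain_weight p - x p"]
    point_nonneg[of p] \<phi>_0
  by (auto simp: transfer_def)

lemma lamx_int_transfer:
  "a \<in> A \<union> U1 \<Longrightarrow> lamx_int U1 mu (transfer \<phi>) a = \<phi> (lamx_int U1 lam x a)"
  using \<phi>_marking by (auto simp: lamx_int_def transfer_U1)

text \<open>Along a chain in \<open>U2\<close> the mapped intervals are stacked, so their lengths telescope.\<close>

lemma sum_transfer_chain_le: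
  "cs \<noteq> [] \<Longrightarrow> set cs \<subseteq> U2 \<Longrightarrow> sorted_wrt lt cs \<Longrightarrow>
   sum_list (map (transfer \<phi>) cs)
     \<le> \<phi> (max_chain_weight (last cs)) - \<phi> (max_chain_weight (hd cs) - x (hd cs))"
proof (induction cs)
  case (Cons c cs)
  show ?case
  proof (cases "cs = []")
    case True
    then show ?thesis using Cons.prems transfer_U2 by simp
  next
    case False
    then have "lt c (hd cs)" "hd cs \<in> U2" using Cons.prems by (cases cs; auto)+
    then have "max_chain_weight c + x (hd cs) \<le> max_chain_weight (hd cs)"
      using Cons.prems by (intro max_chain_weight_step) auto
    then have "\<phi> (max_chain_weight c) \<le> \<phi> (max_chain_weight (hd cs) - x (hd cs))"
      by (intro monoD[OF mono_\<phi>]) simp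
    then show ?thesis using Cons False transfer_U2[where p = c] by simp
  qed
qed simp

lemma transfer_chain_ineq:
  assumes a: "a \<in> A \<union> U1" and b: "b \<in> A \<union> U1" and cs: "cs \<noteq> []" "set cs \<subseteq> U2"
    and sorted: "sorted_wrt lt (b # cs @ [a])"
  shows "sum_list (map (transfer \<phi>) cs)
    \<le> lamx_int U1 mu (transfer \<phi>) a - lamx_int U1 mu (transfer \<phi>) b"
proof -
  have "max_chain_weight (last cs) \<le> lamx_int U1 lam x a"
    using sorted cs by (intro max_chain_weight_le a) (auto simp: sorted_wrt_append)
  then have "\<phi> (max_chain_weight (last cs)) \<le> lamx_int U1 mu (transfer \<phi>) a"
    using lamx_int_transfer[OF a] monoD[OF mono_\<phi>] by simp
  moreover have "lamx_int U1 lam x b + x (hd cs) \<le> max_chain_weight (hd cs)"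
    using sorted cs by (intro lamx_int_add_le_max_chain_weight b) (cases cs; auto)+
  then have "lamx_int U1 mu (transfer \<phi>) b \<le> \<phi> (max_chain_weight (hd cs) - x (hd cs))"
    using lamx_int_transfer[OF b] monoD[OF mono_\<phi>] by simp
  moreover have "sorted_wrt lt cs" using sorted by (simp add: sorted_wrt_append)
  ultimately show ?thesis using sum_transfer_chain_le[OF cs] by simp
qed

lemma transfer_chain_below_U1:
  assumes q: "q \<in> U1" and cs: "set cs \<subseteq> U2" and sorted: "sorted_wrt lt (cs @ [q])"
  shows "sum_list (map (transfer \<phi>) cs) \<le> transfer \<phi> q"
proof (cases "cs = []")
  case True
  then show ?thesis using transfer_nonneg by simp
next
  case False
  have "max_chain_weight (last cs) \<le> lamx_int U1 lam x q"
    using sorted cs q False by (intro max_chain_weight_le) (auto simp: sorted_wrt_append)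
  then have "\<phi> (max_chain_weight (last cs)) \<le> transfer \<phi> q"
    using q monoD[OF mono_\<phi>] by (simp add: lamx_int_def transfer_U1)
  moreover have "hd cs \<in> U2" using cs False by auto
  then have "0 \<le> max_chain_weight (hd cs) - x (hd cs)"
    using le_max_chain_weight_self by simp
  then have "0 \<le> \<phi> (max_chain_weight (hd cs) - x (hd cs))"
    using monoD[OF mono_\<phi>] \<phi>_0 by metis
  moreover have "sorted_wrt lt cs" using sorted by (simp add: sorted_wrt_append)
  ultimately show ?thesis using sum_transfer_chain_le[OF False cs] by simp
qed

lemma transfer_mem_S_int: "transfer \<phi> \<in> S_int P lt A U1 U2 mu"
  unfolding S_int_def mem_Collect_eq
  using transfer_nonneg transfer_outside transfer_chain_ineq transfer_chain_below_U1
    S_intD(3-5)[OF point, THEN monoD[OF mono_\<phi>]]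
  by (auto simp: transfer_U1 \<phi>_marking)

end

end

lemma S_int_add:
  assumes x: "x \<in> S_int P lt A U1 U2 l1" and y: "y \<in> S_int P lt A U1 U2 l2"
  shows "(\<lambda>p. x p + y p) \<in> S_int P lt A U1 U2 (\<lambda>a. l1 a + l2 a)"
proof -
  have lamx: "lamx_int U1 (\<lambda>a. l1 a + l2 a) (\<lambda>p. x p + y p) q
      = lamx_int U1 l1 x q + lamx_int U1 l2 y q" for q
    by (simp add: lamx_int_def)
  show ?thesis
  proof (unfold S_int_def mem_Collect_eq lamx sum_list_addf, intro conjI allI ballI impI)
    fix a b cs assume "a \<in> A \<union> U1" "b \<in> A \<union> U1" "cs \<noteq> []" "set cs \<subseteq> U2"
      "sorted_wrt lt (b # cs @ [a])"
    from add_mono[OF S_intD(6)[OF x this] S_intD(6)[OF y this]]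
    show "sum_list (map x cs) + sum_list (map y cs)
      \<le> lamx_int U1 l1 x a + lamx_int U1 l2 y a - (lamx_int U1 l1 x b + lamx_int U1 l2 y b)"
      by simp
  qed (use S_intD[OF x] S_intD[OF y] in \<open>auto intro: add_mono add_nonneg_nonneg\<close>)
qed

lemma S_int_zero:
  assumes mp: "marked_poset P lt A" and decomp: "decomposition P A U1 U2"
  shows "S_int P lt A U1 U2 (\<lambda>_. 0) = {\<lambda>_. 0}"
proof (intro equalityI subsetI)
  fix x assume x: "x \<in> S_int P lt A U1 U2 (\<lambda>_. 0)"
  have "x p = 0" for p
  proof (cases "p \<in> P - A")
    case True
    obtain a b where a: "a \<in> A" "lt p a" and b: "b \<in> A" "lt b p"
      using marked_above[OF mp True] marked_below[OF mp True] by blast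
    have "p \<in> U1 \<or> p \<in> U2" using True decomp unfolding decomposition_def by blast
    then have "x p \<le> 0"
    proof
      assume "p \<in> U1"
      then show ?thesis using S_intD(3)[OF x _ a] by simp
    next
      assume "p \<in> U2"
      have "lt b a"
        using transp_onD[OF marked_posetD(3)[OF mp] _ _ _ b(2) a(2)] a b True
          marked_posetD(2)[OF mp] by blast
      then have "x p \<le> lamx_int U1 (\<lambda>_. 0) x a - lamx_int U1 (\<lambda>_. 0) x b"
        using S_intD(6)[OF x, of a b "[p]"] a b \<open>p \<in> U2\<close> by simp
      moreover have "a \<notin> U1" "b \<notin> U1" using a b decomp unfolding decomposition_def by blast+
      ultimately show ?thesis by (simp add: lamx_int_def)
    qed
    then show ?thesis using S_intD(1)[OF x, of p] by simp
  qed (use S_intD(2)[OF x] in simp)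
  then show "x \<in> {\<lambda>_. 0}" by auto
qed (simp add: S_int_def lamx_int_def)

lemma minkowski_sum_S_int_subset:
  "minkowski_sum (S_int P lt A U1 U2 l1) (S_int P lt A U1 U2 l2)
     \<subseteq> S_int P lt A U1 U2 (\<lambda>a. l1 a + l2 a)"
  unfolding minkowski_sum_def using S_int_add by blast

lemma S_int_Suc_mult_subset:
  assumes mp: "marked_poset P lt A" and decomp: "decomposition P A U1 U2"
  shows "S_int P lt A U1 U2 (\<lambda>a. Suc n * lam a)
     \<subseteq> minkowski_sum (S_int P lt A U1 U2 lam) (S_int P lt A U1 U2 (\<lambda>a. n * lam a))"
proof
  fix x assume x: "x \<in> S_int P lt A U1 U2 (\<lambda>a. Suc n * lam a)"
  interpret chain_order_point P lt A U1 U2 "\<lambda>a. Suc n * lam a" x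
    using mp decomp x by unfold_locales
  define d where "d = int (Suc n)"
  have d: "0 < d" "int (Suc n * l) div d = int l" for l
    unfolding d_def zdiv_int[symmetric] by (simp, subst nonzero_mult_div_cancel_left) simp_all
  define y where "y = transfer (\<lambda>t. t div d)"
  define z where "z = transfer (\<lambda>t. t - t div d)"
  have "y \<in> S_int P lt A U1 U2 lam"
    unfolding y_def by (rule transfer_mem_S_int) (use d in \<open>auto simp: mono_def zdiv_mono1\<close>)
  moreover have "z \<in> S_int P lt A U1 U2 (\<lambda>a. n * lam a)"
    unfolding z_def by (rule transfer_mem_S_int) (use d in \<open>auto simp: mono_def diff_div_mono\<close>)
  moreover have "(\<lambda>t. t div d + (t - t div d)) = (\<lambda>t. t)" by simp
  then have "x = (\<lambda>p. y p + z p)"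
    unfolding y_def z_def transfer_add[symmetric] by (simp only: transfer_ident)
  ultimately show "x \<in> minkowski_sum (S_int P lt A U1 U2 lam) (S_int P lt A U1 U2 (\<lambda>a. n * lam a))"
    unfolding minkowski_sum_def by blast
qed

lemma S_int_mult_eq_minkowski_power:
  assumes "marked_poset P lt A" and "decomposition P A U1 U2"
  shows "S_int P lt A U1 U2 (\<lambda>a. N * lam a) = minkowski_power N (S_int P lt A U1 U2 lam)"
proof (induction N)
  case 0
  show ?case using S_int_zero[OF assms] by simp
next
  case (Suc n)
  have "minkowski_sum (S_int P lt A U1 U2 lam) (S_int P lt A U1 U2 (\<lambda>a. n * lam a))
      \<subseteq> S_int P lt A U1 U2 (\<lambda>a. Suc n * lam a)"
    using minkowski_sum_S_int_subset[of P lt A U1 U2 lam "\<lambda>a. n * lam a"] by simp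
  with S_int_Suc_mult_subset[OF assms]
  have "S_int P lt A U1 U2 (\<lambda>a. Suc n * lam a)
      = minkowski_sum (S_int P lt A U1 U2 lam) (S_int P lt A U1 U2 (\<lambda>a. n * lam a))" ..
  then show ?case using Suc.IH by simp
qed

theorem theorem2p1:
  fixes P A U1 U2 :: "'a set" and lt :: "'a \<Rightarrow> 'a \<Rightarrow> bool"
    and lam :: "'a \<Rightarrow> nat" and N :: nat
  assumes "marked_poset P lt A"
    and "admissible P lt A U1 U2"
  shows "S_lattice P lt A U1 U2 (\<lambda>a. N * lam a)
           = minkowski_power N (S_lattice P lt A U1 U2 lam)"
  using S_int_mult_eq_minkowski_power[OF assms(1)] assms(2)
  unfolding S_lattice_eq_S_int admissible_def by blast

end
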